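(* There exist absolute constants $c,C>0$ such that for every distribution $\mathcal D$ on $[0,1]\times\{0,1\}$, $$c\,\mathsf{DistCal}(\mathcal D)^2\le\mathsf{SCDL}(\mathcal D)\le C\sqrt{\mathsf{DistCal}(\mathcal D)}.$$
   Context: For $x\in\mathbb R$ write $x_+=\max\{x,0\}$. For a distribution $\mathcal D$ of $(p,y)\in[0,1]\times\{0,1\}$, a positive integer $m$ and $i\in\{0,\ldots,m\}$, let $w_i(p)=(1-|mp-i|)_+$, $\pi_i=\mathbb E_{\mathcal D}[w_i(p)]$ and $q_i=\mathbb E_{\mathcal D}[w_i(p)y]/\pi_i$ (terms with $\pi_i=0$ are $0$). Define $$\mathsf{SCDL}_m(\mathcal D)=\max_{i=0,\ldots,m}\Big(\sum_{j=0}^{i}\pi_j\big(q_j-\tfrac{i+1}{m}\big)_+ +\sum_{j=i+1}^{m}\pi_j\big(\tfrac im-q_j\big)_+\Big),\quad \mathsf{SCDL}(\mathcal D)=\inf_{m\in\{2^1,2^2,\ldots\}}\max\{\mathsf{SCDL}_m(\mathcal D),1/m\}.$$ A distribution of $(p,y)$ is calibrated if $\mathbb E[y\mid p]=p$. The lower distance to calibration is $\mathsf{DistCal}(\mathcal D)=\inf_{\mathcal J}\mathbb E_{(p,p',y)\sim\mathcal J}|p-p'|$, the infimum over all joint distributions $\mathcal J$ of $(p,p',y)\in[0,1]\times[0,1]\times\{0,1\}$ whose $(p,y)$-marginal is $\mathcal D$ and whose $(p',y)$-marginal is calibrated. *)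

theory Defs
  imports "HOL-Probability.Probability"
begin

text \<open>Distributions of (p,y) in [0,1] x {0,1}; y is encoded as a bool (True = 1).\<close>

definition py_space :: "(real \<times> bool) measure" where
  "py_space = borel \<Otimes>\<^sub>M count_space UNIV"

definition ppy_space :: "(real \<times> real \<times> bool) measure" where
  "ppy_space = borel \<Otimes>\<^sub>M (borel \<Otimes>\<^sub>M count_space UNIV)"

definition is_dist :: "(real \<times> bool) measure \<Rightarrow> bool" where
  "is_dist D \<longleftrightarrow> prob_space D \<and> sets D = sets py_space \<and>
     (AE z in D. fst z \<in> {0..1})"

definition wt :: "nat \<Rightarrow> nat \<Rightarrow> real \<Rightarrow> real" where
  "wt m i p = max (1 - \<bar>real m * p - real i\<bar>) 0"

definition pi_w :: "(real \<times> bool) measure \<Rightarrow> nat \<Rightarrow> nat \<Rightarrow> real" where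
  "pi_w D m i = (\<integral>z. wt m i (fst z) \<partial>D)"

definition q_w :: "(real \<times> bool) measure \<Rightarrow> nat \<Rightarrow> nat \<Rightarrow> real" where
  "q_w D m i = (if pi_w D m i = 0 then 0
      else (\<integral>z. wt m i (fst z) * of_bool (snd z) \<partial>D) / pi_w D m i)"

definition SCDL_m :: "(real \<times> bool) measure \<Rightarrow> nat \<Rightarrow> real" where
  "SCDL_m D m = Max ((\<lambda>i.
      (\<Sum>j\<in>{0..i}. pi_w D m j * max (q_w D m j - real (i + 1) / real m) 0)
    + (\<Sum>j\<in>{i+1..m}. pi_w D m j * max (real i / real m - q_w D m j) 0)) ` {0..m})"

definition SCDL :: "(real \<times> bool) measure \<Rightarrow> real" where
  "SCDL D = (INF k\<in>{k::nat. 1 \<le> k}. max (SCDL_m D (2 ^ k)) (1 / 2 ^ k))"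

text \<open>Calibration: E[y | p] = p, written via the defining property of conditional
  expectation: for every Borel set A, E[1_A(p) y] = E[1_A(p) p].\<close>
definition calibrated :: "(real \<times> bool) measure \<Rightarrow> bool" where
  "calibrated M \<longleftrightarrow> (\<forall>A\<in>sets borel.
      (\<integral>z. indicator A (fst z) * of_bool (snd z) \<partial>M) =
      (\<integral>z. indicator A (fst z) * fst z \<partial>M))"

definition couplings :: "(real \<times> bool) measure \<Rightarrow> (real \<times> real \<times> bool) measure set" where
  "couplings D = {J. prob_space J \<and> sets J = sets ppy_space \<and>
      (AE z in J. fst z \<in> {0..1} \<and> fst (snd z) \<in> {0..1}) \<and>
      distr J py_space (\<lambda>(p, p', y). (p, y)) = D \<and>
      calibrated (distr J py_space (\<lambda>(p, p', y). (p', y)))}"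

definition DistCal :: "(real \<times> bool) measure \<Rightarrow> real" where
  "DistCal D = (INF J\<in>couplings D. \<integral>z. \<bar>fst z - fst (snd z)\<bar> \<partial>J)"

end

theory Submission
  imports Defs
begin

text \<open>Lower bound: put \<open>p' = q\<^sub>j\<close> for a bucket \<open>j\<close> drawn with probability \<open>w\<^sub>j(p)\<close>.
  This coupling is calibrated and costs at most \<open>1/m + \<Sum>\<^sub>j \<pi>\<^sub>j |q\<^sub>j - j/m|\<close>. When the
  \<open>m + 1\<close> threshold terms of \<open>SCDL\<^sub>m\<close> are summed over \<open>i\<close>, bucket \<open>j\<close> contributes at least
  \<open>m/4\<close> times the square of the excess of \<open>q\<^sub>j\<close> over \<open>[(j - 1)/m, (j + 1)/m]\<close>; hence the
  weighted squared excesses are at most \<open>8 SCDL\<^sub>m\<close>, and AM-GM gives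
  \<open>DistCal = O(\<surd>max(SCDL\<^sub>m, 1/m))\<close>.

  Upper bound: for a calibrated coupling \<open>(p, p', y)\<close>, testing a threshold term against
  \<open>w\<^sub>j(p')\<close> instead of \<open>w\<^sub>j(p)\<close> makes it nonpositive, at a cost of \<open>E|w\<^sub>j(p) - w\<^sub>j(p')|\<close>;
  these costs sum to at most \<open>3m E|p - p'|\<close>. So \<open>SCDL\<^sub>m \<le> 9m E|p - p'|\<close>, and the scale
  \<open>m = 2\<^sup>k \<approx> E|p - p'|\<^sup>-\<^sup>1\<^sup>/\<^sup>2\<close> gives \<open>SCDL = O(\<surd>DistCal)\<close>.\<close>

section \<open>Hat functions\<close>

lemma sum_of_nat_le_sum_support:
  fixes F :: "int \<Rightarrow> real"
  assumes "finite A" "finite B" "\<And>k. 0 \<le> F k" "\<And>k. k \<notin> B \<Longrightarrow> F k = 0"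
  shows "(\<Sum>j\<in>A. F (int j)) \<le> sum F B"
proof -
  have "(\<Sum>j\<in>A. F (int j)) = sum F (int ` A)"
    by (simp add: sum.reindex)
  also have "\<dots> = sum F (int ` A \<inter> B)"
    using assms by (intro sum.mono_neutral_right) auto
  also have "\<dots> \<le> sum F B"
    using assms by (intro sum_mono2) auto
  finally show ?thesis .
qed

lemma hat_sum_le_1:
  assumes "finite A"
  shows "(\<Sum>j\<in>A. max (1 - \<bar>u - real j\<bar>) 0) \<le> 1"
proof -
  define n where "n = \<lfloor>u\<rfloor>"
  have n: "real_of_int n \<le> u" "u < real_of_int n + 1"
    unfolding n_def by linarith+
  define F where "F = (\<lambda>k::int. max (1 - \<bar>u - real_of_int k\<bar>) 0)"
  have "(\<Sum>j\<in>A. max (1 - \<bar>u - real j\<bar>) 0) = (\<Sum>j\<in>A. F (int j))"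
    unfolding F_def by simp
  also have "\<dots> \<le> sum F {n, n + 1}"
  proof (rule sum_of_nat_le_sum_support)
    fix k assume "k \<notin> {n, n + 1}"
    then have "k \<le> n - 1 \<or> k \<ge> n + 2"
      by auto
    then have "\<bar>u - real_of_int k\<bar> \<ge> 1"
      using n by (auto simp: abs_if)
    then show "F k = 0"
      unfolding F_def by simp
  qed (auto simp: F_def assms)
  also have "\<dots> = 1"
    using n unfolding F_def by (simp add: abs_if max_def)
  finally show ?thesis .
qed

lemma hat_sum_eq_1:
  assumes "0 \<le> u" "u \<le> real m"
  shows "(\<Sum>j\<in>{0..m}. max (1 - \<bar>u - real j\<bar>) 0) = 1"
proof -
  define n where "n = nat \<lfloor>u\<rfloor>"
  have n: "real n \<le> u" "u < real n + 1"
    unfolding n_def using assms by linarith+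
  define N where "N = (if n = m then {m} else {n, n + 1})"
  have "N \<subseteq> {0..m}"
    using n assms by (auto simp: N_def)
  moreover have "max (1 - \<bar>u - real j\<bar>) 0 = 0" if "j \<notin> N" "j \<le> m" for j
  proof -
    have "j + 1 \<le> n \<or> j \<ge> n + 2"
      using that n assms by (auto simp: N_def split: if_splits)
    then have "real j + 1 \<le> real n \<or> real j \<ge> real n + 2"
      by linarith
    then show ?thesis
      using n by (auto simp: abs_if max_def)
  qed
  ultimately have "(\<Sum>j\<in>{0..m}. max (1 - \<bar>u - real j\<bar>) 0) = (\<Sum>j\<in>N. max (1 - \<bar>u - real j\<bar>) 0)"
    by (intro sum.mono_neutral_right) auto
  also have "\<dots> = 1"
    using n assms by (auto simp: N_def abs_if max_def)
  finally show ?thesis .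
qed

lemma hat_sum_abs_diff_le:
  assumes "finite A"
  shows "(\<Sum>j\<in>A. \<bar>max (1 - \<bar>u - real j\<bar>) 0 - max (1 - \<bar>v - real j\<bar>) 0\<bar>) \<le> 3 * \<bar>u - v\<bar>"
proof (cases "\<bar>u - v\<bar> \<ge> 1")
  case True
  have "(\<Sum>j\<in>A. \<bar>max (1 - \<bar>u - real j\<bar>) 0 - max (1 - \<bar>v - real j\<bar>) 0\<bar>)
      \<le> (\<Sum>j\<in>A. max (1 - \<bar>u - real j\<bar>) 0) + (\<Sum>j\<in>A. max (1 - \<bar>v - real j\<bar>) 0)"
    unfolding sum.distrib[symmetric] by (intro sum_mono) (auto simp: abs_le_iff)
  also have "\<dots> \<le> 2"
    using hat_sum_le_1[OF assms, of u] hat_sum_le_1[OF assms, of v] by linarith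
  also have "\<dots> \<le> 3 * \<bar>u - v\<bar>"
    using True by simp
  finally show ?thesis .
next
  case False
  define n where "n = \<lfloor>min u v\<rfloor>"
  have n: "real_of_int n \<le> min u v" "min u v < real_of_int n + 1"
    unfolding n_def by linarith+
  define F where
    "F = (\<lambda>k::int. \<bar>max (1 - \<bar>u - real_of_int k\<bar>) 0 - max (1 - \<bar>v - real_of_int k\<bar>) 0\<bar>)"
  have F_le: "F k \<le> \<bar>u - v\<bar>" for k
    unfolding F_def by (auto simp: max_def abs_if)
  have "(\<Sum>j\<in>A. \<bar>max (1 - \<bar>u - real j\<bar>) 0 - max (1 - \<bar>v - real j\<bar>) 0\<bar>) = (\<Sum>j\<in>A. F (int j))"
    unfolding F_def by simp
  also have "\<dots> \<le> sum F {n, n + 1, n + 2}"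
  proof (rule sum_of_nat_le_sum_support)
    fix k assume "k \<notin> {n, n + 1, n + 2}"
    then have "k \<le> n - 1 \<or> k \<ge> n + 3"
      by auto
    then have "real_of_int k \<le> real_of_int n - 1 \<or> real_of_int k \<ge> real_of_int n + 3"
      by linarith
    then have "\<bar>u - real_of_int k\<bar> \<ge> 1 \<and> \<bar>v - real_of_int k\<bar> \<ge> 1"
      using n False by (auto simp: abs_if min_less_iff_disj split: if_split_asm)
    then show "F k = 0"
      unfolding F_def by simp
  qed (auto simp: F_def assms)
  also have "\<dots> \<le> 3 * \<bar>u - v\<bar>"
    using F_le[of n] F_le[of "n + 1"] F_le[of "n + 2"] by simp
  finally show ?thesis .
qed

lemma wt_nonneg: "0 \<le> wt m j p"
  by (simp add: wt_def)

lemma wt_le_1: "wt m j p \<le> 1"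
  by (simp add: wt_def)

lemma wt_borel [measurable]: "wt m j \<in> borel_measurable borel"
  unfolding wt_def by measurable

lemma abs_diff_less_1_if_wt_nonzero: "wt m j p \<noteq> 0 \<Longrightarrow> \<bar>real m * p - real j\<bar> < 1"
  by (auto simp: wt_def max_def split: if_splits)

lemma wt_eq_0_if_ge: "real (j + 1) / real m \<le> p \<Longrightarrow> 0 < m \<Longrightarrow> wt m j p = 0"
  by (auto simp: wt_def field_simps)

lemma wt_eq_0_if_le: "p \<le> (real j - 1) / real m \<Longrightarrow> 0 < m \<Longrightarrow> wt m j p = 0"
  by (auto simp: wt_def field_simps)

lemma sum_wt_eq_1: "1 \<le> m \<Longrightarrow> p \<in> {0..1} \<Longrightarrow> (\<Sum>j\<in>{0..m}. wt m j p) = 1"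
  unfolding wt_def using hat_sum_eq_1[of "real m * p" m]
  by (auto simp: mult_le_cancel_left1)

lemma sum_wt_abs_diff_le: "(\<Sum>j\<in>{0..m}. \<bar>wt m j x - wt m j y\<bar>) \<le> 3 * real m * \<bar>x - y\<bar>"
  unfolding wt_def using hat_sum_abs_diff_le[of "{0..m}" "real m * x" "real m * y"]
  by (simp add: right_diff_distrib[symmetric] abs_mult)

section \<open>Threshold gaps\<close>

definition threshold_gap :: "nat \<Rightarrow> (nat \<Rightarrow> real) \<Rightarrow> (nat \<Rightarrow> real) \<Rightarrow> nat \<Rightarrow> real" where
  "threshold_gap m \<pi> q i =
     (\<Sum>j\<in>{0..i}. \<pi> j * max (q j - real (i + 1) / real m) 0)
   + (\<Sum>j\<in>{i+1..m}. \<pi> j * max (real i / real m - q j) 0)"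

lemma SCDL_m_eq_Max_threshold_gap:
  "SCDL_m D m = Max (threshold_gap m (pi_w D m) (q_w D m) ` {0..m})"
  unfolding SCDL_m_def threshold_gap_def ..

lemma SCDL_nonneg: "0 \<le> SCDL D"
  unfolding SCDL_def by (intro cINF_greatest) (auto simp: le_max_iff_disj)

lemma SCDL_le_scale: "1 \<le> k \<Longrightarrow> SCDL D \<le> max (SCDL_m D (2 ^ k)) (1 / 2 ^ k)"
  unfolding SCDL_def by (intro cINF_lower bdd_belowI[of _ 0]) (auto simp: le_max_iff_disj)

lemma quarter_sq_le_sum_ramp:
  assumes "0 \<le> t" "real m * t \<le> real N" "0 < m"
  shows "real m * t\<^sup>2 / 4 \<le> (\<Sum>d\<in>{0..N}. max (t - real d / real m) 0)"
proof -
  define K where "K = nat \<lfloor>real m * t / 2\<rfloor>"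
  have "real K = real_of_int \<lfloor>real m * t / 2\<rfloor>"
    unfolding K_def using assms(1) by simp
  then have K: "real K \<le> real m * t / 2" "real m * t / 2 \<le> real K + 1"
    by linarith+
  have "K \<le> N"
    using K assms by linarith
  have "real m * t\<^sup>2 / 4 \<le> (real K + 1) * (t / 2)"
    using mult_right_mono[OF K(2), of "t / 2"] assms(1) by (simp add: power2_eq_square)
  also have "\<dots> = (\<Sum>d\<in>{0..K}. t / 2)"
    by simp
  also have "\<dots> \<le> (\<Sum>d\<in>{0..K}. max (t - real d / real m) 0)"
  proof (intro sum_mono)
    fix d assume "d \<in> {0..K}"
    then have "real d / real m \<le> t / 2"
      using K assms(3) by (simp add: field_simps)
    then show "t / 2 \<le> max (t - real d / real m) 0"
      by linarith
  qed
  also have "\<dots> \<le> (\<Sum>d\<in>{0..N}. max (t - real d / real m) 0)"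
    using \<open>K \<le> N\<close> by (intro sum_mono2) auto
  finally show ?thesis .
qed

lemma quarter_sq_overshoot_le_sum:
  assumes "0 < m" "q \<le> 1" "j \<le> m"
  shows "real m * (max (q - real (j + 1) / real m) 0)\<^sup>2 / 4
     \<le> (\<Sum>i\<in>{j..m}. max (q - real (i + 1) / real m) 0)"
proof (cases "q - real (j + 1) / real m \<ge> 0")
  case True
  define t where "t = q - real (j + 1) / real m"
  have "(\<Sum>i\<in>{j..m}. max (q - real (i + 1) / real m) 0)
      = (\<Sum>d\<in>{0..m - j}. max (q - real (d + j + 1) / real m) 0)"
    using sum.shift_bounds_cl_nat_ivl[of "\<lambda>i. max (q - real (i + 1) / real m) 0" 0 j "m - j"] assms(3)
    by (simp add: add.commute)
  also have "\<dots> = (\<Sum>d\<in>{0..m - j}. max (t - real d / real m) 0)"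
    unfolding t_def by (intro sum.cong) (auto simp: add_divide_distrib diff_divide_distrib)
  also have "\<dots> \<ge> real m * t\<^sup>2 / 4"
  proof (rule quarter_sq_le_sum_ramp)
    have "real m * t = real m * q - real (j + 1)"
      unfolding t_def using assms(1) by (simp add: right_diff_distrib)
    also have "\<dots> \<le> real (m - j) - 1"
      using assms by simp
    finally show "real m * t \<le> real (m - j)"
      by simp
  qed (use True assms(1) t_def in auto)
  finally show ?thesis
    unfolding t_def using True by simp
qed (auto intro!: sum_nonneg)

lemma quarter_sq_undershoot_le_sum:
  assumes "0 < m" "0 \<le> q"
  shows "real m * (max ((real j - 1) / real m - q) 0)\<^sup>2 / 4
     \<le> (\<Sum>i\<in>{0..<j}. max (real i / real m - q) 0)"
proof (cases "(real j - 1) / real m - q \<ge> 0 \<and> j > 0")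
  case True
  then obtain J where J: "j = Suc J"
    by (cases j) auto
  define t where "t = (real j - 1) / real m - q"
  have "(\<Sum>i\<in>{0..<j}. max (real i / real m - q) 0) = (\<Sum>i\<in>{0..J}. max (real i / real m - q) 0)"
    using J atLeastLessThanSuc_atLeastAtMost by simp
  also have "\<dots> = (\<Sum>d\<in>{0..J}. max (real (J - d) / real m - q) 0)"
    by (subst sum.atLeastAtMost_rev) simp
  also have "\<dots> = (\<Sum>d\<in>{0..J}. max (t - real d / real m) 0)"
    unfolding t_def J by (intro sum.cong) (auto simp: of_nat_diff diff_divide_distrib)
  also have "\<dots> \<ge> real m * t\<^sup>2 / 4"
  proof (rule quarter_sq_le_sum_ramp)
    show "real m * t \<le> real J"
      unfolding t_def J using assms by (simp add: right_diff_distrib)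
  qed (use True assms(1) t_def in auto)
  finally show ?thesis
    unfolding t_def using True by simp
next
  case False
  then have "max ((real j - 1) / real m - q) 0 = 0"
    using assms by (auto simp: max_def field_simps)
  then show ?thesis
    by (auto intro!: sum_nonneg)
qed

lemma sum_threshold_gap_eq:
  "(\<Sum>i\<in>{0..m}. threshold_gap m \<pi> q i)
     = (\<Sum>j\<in>{0..m}. \<pi> j * ((\<Sum>i\<in>{j..m}. max (q j - real (i + 1) / real m) 0)
                             + (\<Sum>i\<in>{0..<j}. max (real i / real m - q j) 0)))"
proof -
  have lower: "(\<Sum>i\<in>{0..n}. \<Sum>j\<in>{0..i}. a i j) = (\<Sum>j\<in>{0..n}. \<Sum>i\<in>{j..n}. a i j)"
    for n :: nat and a :: "nat \<Rightarrow> nat \<Rightarrow> real"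
    by (induction n) (auto simp: sum.distrib)
  have upper: "(\<Sum>i\<in>{0..n}. \<Sum>j\<in>{i+1..n}. a i j) = (\<Sum>j\<in>{0..n}. \<Sum>i\<in>{0..<j}. a i j)"
    for n :: nat and a :: "nat \<Rightarrow> nat \<Rightarrow> real"
    by (induction n) (auto simp: sum.distrib atLeastLessThanSuc_atLeastAtMost[symmetric])
  show ?thesis
    unfolding threshold_gap_def sum.distrib lower upper
    by (simp add: sum_distrib_left distrib_left sum.distrib)
qed

lemma weighted_sq_excess_le_Max_threshold_gap:
  assumes "0 < m" and \<pi>: "\<And>j. 0 \<le> \<pi> j" and q: "\<And>j. q j \<in> {0..1}"
  shows "(\<Sum>j\<in>{0..m}. \<pi> j * ((max (q j - real (j + 1) / real m) 0)\<^sup>2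
           + (max ((real j - 1) / real m - q j) 0)\<^sup>2)) \<le> 8 * Max (threshold_gap m \<pi> q ` {0..m})"
    (is "?E \<le> 8 * ?S")
proof -
  have gap_nonneg: "0 \<le> threshold_gap m \<pi> q i" for i
    unfolding threshold_gap_def using \<pi> by (intro add_nonneg_nonneg sum_nonneg mult_nonneg_nonneg) auto
  have gap_le: "threshold_gap m \<pi> q i \<le> ?S" if "i \<in> {0..m}" for i
    using that by (intro Max_ge) auto
  have "real m / 4 * ?E = (\<Sum>j\<in>{0..m}. \<pi> j * (real m * ((max (q j - real (j + 1) / real m) 0)\<^sup>2
           + (max ((real j - 1) / real m - q j) 0)\<^sup>2) / 4))"
    by (subst sum_distrib_left) (rule sum.cong; simp add: algebra_simps)
  also have "\<dots> \<le> (\<Sum>i\<in>{0..m}. threshold_gap m \<pi> q i)"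
    unfolding sum_threshold_gap_eq
  proof (intro sum_mono mult_left_mono)
    fix j assume "j \<in> {0..m}"
    then show "real m * ((max (q j - real (j + 1) / real m) 0)\<^sup>2
        + (max ((real j - 1) / real m - q j) 0)\<^sup>2) / 4
      \<le> (\<Sum>i\<in>{j..m}. max (q j - real (i + 1) / real m) 0)
        + (\<Sum>i\<in>{0..<j}. max (real i / real m - q j) 0)"
      using quarter_sq_overshoot_le_sum[OF assms(1), of "q j" j]
        quarter_sq_undershoot_le_sum[OF assms(1), of "q j" j] q[of j]
      by (simp add: distrib_left add_divide_distrib)
  qed (use \<pi> in auto)
  also have "\<dots> \<le> (1 + real m) * ?S"
    using sum_bounded_above[of "{0..m}" "threshold_gap m \<pi> q" ?S] gap_le by simp
  also have "\<dots> \<le> 2 * real m * ?S"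
    using assms(1) order_trans[OF gap_nonneg gap_le, of 0] by (intro mult_right_mono) auto
  finally show ?thesis
    using assms(1) by (simp add: field_simps)
qed

lemma is_distD:
  assumes "is_dist D"
  shows "prob_space D" "sets D = sets py_space" "AE z in D. fst z \<in> {0..1}"
  using assms unfolding is_dist_def by auto

lemma measurable_is_dist: "is_dist D \<Longrightarrow> measurable D M = measurable py_space M"
  by (intro measurable_cong_sets) (auto dest: is_distD)

lemma integrable_bounded:
  fixes f :: "'a \<Rightarrow> real"
  assumes "prob_space M" "sets M = sets S" "f \<in> borel_measurable S" "AE x in M. \<bar>f x\<bar> \<le> B"
  shows "integrable M f"
  using assms measurable_cong_sets[OF assms(2) refl]
  by (intro finite_measure.integrable_const_bound[where B = B] prob_space.finite_measure) auto

lemma integrable_wt: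
  assumes "is_dist D"
  shows "integrable D (\<lambda>z. wt m j (fst z))"
    and "integrable D (\<lambda>z. wt m j (fst z) * of_bool (snd z))"
  by (rule integrable_bounded[OF is_distD(1,2)[OF assms], where B = 1];
      simp add: py_space_def wt_nonneg wt_le_1)+

lemma pi_w_nonneg: "0 \<le> pi_w D m j"
  unfolding pi_w_def by (intro integral_nonneg_AE) (simp add: wt_nonneg)

lemma integral_wt_y_le_pi_w:
  assumes "is_dist D"
  shows "(\<integral>z. wt m j (fst z) * of_bool (snd z) \<partial>D) \<le> pi_w D m j"
  unfolding pi_w_def using integrable_wt[OF assms] by (intro integral_mono) (auto simp: wt_nonneg)

lemma integral_wt_y_nonneg: "0 \<le> (\<integral>z. wt m j (fst z) * of_bool (snd z) \<partial>D)"
  by (intro integral_nonneg_AE) (simp add: wt_nonneg)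

lemma pi_w_mult_q_w:
  assumes "is_dist D"
  shows "pi_w D m j * q_w D m j = (\<integral>z. wt m j (fst z) * of_bool (snd z) \<partial>D)"
  using integral_wt_y_le_pi_w[OF assms, of m j] integral_wt_y_nonneg[of D m j]
  unfolding q_w_def by auto

lemma q_w_bounds:
  assumes "is_dist D"
  shows "q_w D m j \<in> {0..1}"
  using integral_wt_y_le_pi_w[OF assms, of m j] integral_wt_y_nonneg[of D m j]
  unfolding q_w_def by (auto simp: divide_le_eq_1)

lemma integral_sum_wt:
  assumes "is_dist D"
  shows "(\<integral>z. (\<Sum>j\<in>{0..m}. wt m j (fst z) * c j) \<partial>D) = (\<Sum>j\<in>{0..m}. c j * pi_w D m j)"
  unfolding pi_w_def using integrable_wt(1)[OF assms]
  by (subst Bochner_Integration.integral_sum) (auto simp: mult.commute)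

lemma integral_sum_wt_y:
  assumes "is_dist D"
  shows "(\<integral>z. (\<Sum>j\<in>{0..m}. wt m j (fst z) * (c j * of_bool (snd z))) \<partial>D)
     = (\<Sum>j\<in>{0..m}. c j * (pi_w D m j * q_w D m j))"
  unfolding pi_w_mult_q_w[OF assms] using integrable_wt(2)[OF assms]
  by (subst Bochner_Integration.integral_sum) (auto simp: mult.left_commute)

lemma integral_wt_affine:
  assumes "is_dist D"
  shows "(\<integral>z. wt m j (fst z) * (\<alpha> * of_bool (snd z) + \<beta>) \<partial>D) = pi_w D m j * (\<alpha> * q_w D m j + \<beta>)"
proof -
  have "(\<integral>z. wt m j (fst z) * (\<alpha> * of_bool (snd z) + \<beta>) \<partial>D)
      = (\<integral>z. \<alpha> * (wt m j (fst z) * of_bool (snd z)) + \<beta> * wt m j (fst z) \<partial>D)"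
    by (simp add: algebra_simps)
  also have "\<dots> = \<alpha> * (pi_w D m j * q_w D m j) + \<beta> * pi_w D m j"
    using integrable_wt[OF assms] unfolding pi_w_mult_q_w[OF assms]
    by (simp add: pi_w_def Bochner_Integration.integral_add)
  finally show ?thesis
    by (simp add: algebra_simps)
qed

lemma sum_pi_w_eq_1:
  assumes "is_dist D" "1 \<le> m"
  shows "(\<Sum>j\<in>{0..m}. pi_w D m j) = 1"
proof -
  have "(\<Sum>j\<in>{0..m}. pi_w D m j) = (\<integral>z. (\<Sum>j\<in>{0..m}. wt m j (fst z) * 1) \<partial>D)"
    using integral_sum_wt[OF assms(1), of m "\<lambda>_. 1"] by simp
  also have "\<dots> = (\<integral>z. 1 \<partial>D)"
    using is_distD(3)[OF assms(1)] sum_wt_eq_1[OF assms(2)]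
    by (intro integral_cong_AE) (auto simp: measurable_is_dist[OF assms(1)] py_space_def)
  also have "\<dots> = 1"
    using prob_space.prob_space[OF is_distD(1)[OF assms(1)]] by simp
  finally show ?thesis .
qed

section \<open>The smoothing coupling\<close>

text \<open>The density in the bucket index draws \<open>j\<close> with probability \<open>w\<^sub>j(p)\<close>. Since
  \<open>E[y | p' = v]\<close> averages the \<open>q\<^sub>j\<close> equal to \<open>v\<close>, the pair \<open>(p', y)\<close> is calibrated.\<close>

definition smoothing_coupling :: "(real \<times> bool) measure \<Rightarrow> nat \<Rightarrow> (real \<times> real \<times> bool) measure" where
  "smoothing_coupling D m =
     distr (density (D \<Otimes>\<^sub>M count_space {0..m}) (\<lambda>((p, y), j). ennreal (wt m j p)))
       ppy_space (\<lambda>((p, y), j). (p, q_w D m j, y))"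

lemma sets_smoothing_coupling [measurable_cong]: "sets (smoothing_coupling D m) = sets ppy_space"
  by (simp add: smoothing_coupling_def)

lemma space_ppy_space: "space ppy_space = UNIV"
  by (simp add: ppy_space_def space_pair_measure)

lemma nn_integral_smoothing_coupling:
  assumes D: "is_dist D" and h: "h \<in> borel_measurable ppy_space"
  shows "(\<integral>\<^sup>+ x. h x \<partial>smoothing_coupling D m) =
    (\<integral>\<^sup>+ z. (\<Sum>j\<in>{0..m}. ennreal (wt m j (fst z)) * h (fst z, q_w D m j, snd z)) \<partial>D)"
proof -
  let ?C = "count_space {0..m} :: nat measure"
  let ?f = "\<lambda>((p, y), j). ennreal (wt m j p)"
  let ?g = "\<lambda>((p, y), j). (p, q_w D m j, y)"
  interpret C: sigma_finite_measure ?C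
    by (rule sigma_finite_measure_count_space_finite) simp
  have sets_eq: "sets (D \<Otimes>\<^sub>M ?C) = sets (py_space \<Otimes>\<^sub>M ?C)"
    using is_distD(2)[OF D] by (intro sets_pair_measure_cong) auto
  note meas = measurable_cong_sets[OF sets_eq refl]
  have [measurable]: "(\<lambda>x. q_w D m (snd x)) \<in> borel_measurable ((borel \<Otimes>\<^sub>M count_space UNIV) \<Otimes>\<^sub>M ?C)"
    by (rule measurable_compose[OF measurable_snd]) simp
  have g: "?g \<in> measurable (D \<Otimes>\<^sub>M ?C) ppy_space"
    unfolding meas ppy_space_def py_space_def case_prod_beta by measurable
  have f: "?f \<in> borel_measurable (D \<Otimes>\<^sub>M ?C)"
    unfolding meas py_space_def case_prod_beta
    by (rule measurable_compose_countable'[where I = "{0..m}"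
          and f = "\<lambda>j x. ennreal (wt m j (fst (fst x)))"]) auto
  have "(\<integral>\<^sup>+ x. h x \<partial>smoothing_coupling D m) = (\<integral>\<^sup>+ x. h (?g x) \<partial>density (D \<Otimes>\<^sub>M ?C) ?f)"
    unfolding smoothing_coupling_def using g h by (intro nn_integral_distr) auto
  also have "\<dots> = (\<integral>\<^sup>+ x. ?f x * h (?g x) \<partial>(D \<Otimes>\<^sub>M ?C))"
    using f g h by (intro nn_integral_density) auto
  also have "\<dots> = (\<integral>\<^sup>+ z. \<integral>\<^sup>+ j. ?f (z, j) * h (?g (z, j)) \<partial>?C \<partial>D)"
    using f g h by (intro C.nn_integral_fst[symmetric]) auto
  also have "\<dots> = (\<integral>\<^sup>+ z. (\<Sum>j\<in>{0..m}. ennreal (wt m j (fst z)) * h (fst z, q_w D m j, snd z)) \<partial>D)"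
    by (simp add: nn_integral_count_space_finite case_prod_beta)
  finally show ?thesis .
qed

lemma AE_smoothing_coupling:
  assumes D: "is_dist D" and P: "{x \<in> space ppy_space. \<not> P x} \<in> sets ppy_space"
    and ae: "AE z in D. \<forall>j\<in>{0..m}. P (fst z, q_w D m j, snd z)"
  shows "AE x in smoothing_coupling D m. P x"
proof -
  let ?N = "{x \<in> space ppy_space. \<not> P x}"
  have "emeasure (smoothing_coupling D m) ?N = (\<integral>\<^sup>+ x. indicator ?N x \<partial>smoothing_coupling D m)"
    using P by (simp add: sets_smoothing_coupling)
  also have "\<dots> = (\<integral>\<^sup>+ z. (\<Sum>j\<in>{0..m}. ennreal (wt m j (fst z)) * indicator ?N (fst z, q_w D m j, snd z)) \<partial>D)"
    using P by (intro nn_integral_smoothing_coupling[OF D]) simp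
  also have "\<dots> = (\<integral>\<^sup>+ z. 0 \<partial>D)"
    using ae by (intro nn_integral_cong_AE) (auto simp: space_ppy_space)
  finally show ?thesis
    using P by (intro AE_I[of _ _ ?N]) (auto simp: sets_smoothing_coupling space_ppy_space
        simp flip: sets_eq_imp_space_eq[OF sets_smoothing_coupling])
qed

lemma prob_space_smoothing_coupling:
  assumes D: "is_dist D" and m: "1 \<le> m"
  shows "prob_space (smoothing_coupling D m)"
proof
  have "emeasure (smoothing_coupling D m) (space (smoothing_coupling D m))
      = (\<integral>\<^sup>+ x. 1 \<partial>smoothing_coupling D m)"
    by simp
  also have "\<dots> = (\<integral>\<^sup>+ z. (\<Sum>j\<in>{0..m}. ennreal (wt m j (fst z)) * 1) \<partial>D)"
    by (rule nn_integral_smoothing_coupling[OF D]) simp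
  also have "\<dots> = (\<integral>\<^sup>+ z. 1 \<partial>D)"
    using is_distD(3)[OF D]
    by (intro nn_integral_cong_AE, eventually_elim) (simp add: sum_ennreal wt_nonneg sum_wt_eq_1[OF m])
  also have "\<dots> = 1"
    using prob_space.emeasure_space_1[OF is_distD(1)[OF D]] by simp
  finally show "emeasure (smoothing_coupling D m) (space (smoothing_coupling D m)) = 1" .
qed

lemma integral_smoothing_coupling:
  assumes D: "is_dist D" and H: "H \<in> borel_measurable ppy_space"
    and H_nonneg: "\<And>p p' y. p \<in> {0..1} \<Longrightarrow> p' \<in> {0..1} \<Longrightarrow> 0 \<le> H (p, p', y)"
  shows "(\<integral>x. H x \<partial>smoothing_coupling D m)
       = (\<integral>z. (\<Sum>j\<in>{0..m}. wt m j (fst z) * H (fst z, q_w D m j, snd z)) \<partial>D)"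
proof -
  have [measurable]: "H \<in> borel_measurable (borel \<Otimes>\<^sub>M (borel \<Otimes>\<^sub>M count_space UNIV))"
    using H unfolding ppy_space_def .
  have ae_D: "AE z in D. \<forall>j\<in>{0..m}. 0 \<le> H (fst z, q_w D m j, snd z)"
    using is_distD(3)[OF D] by eventually_elim (auto intro!: H_nonneg q_w_bounds[OF D])
  have ae_J: "AE x in smoothing_coupling D m. 0 \<le> H x"
    using H by (intro AE_smoothing_coupling[OF D _ ae_D]) (simp add: ppy_space_def)
  have "(\<integral>x. H x \<partial>smoothing_coupling D m) = enn2real (\<integral>\<^sup>+ x. ennreal (H x) \<partial>smoothing_coupling D m)"
    using H ae_J by (intro integral_eq_nn_integral) auto
  also have "(\<integral>\<^sup>+ x. ennreal (H x) \<partial>smoothing_coupling D m)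
     = (\<integral>\<^sup>+ z. (\<Sum>j\<in>{0..m}. ennreal (wt m j (fst z)) * ennreal (H (fst z, q_w D m j, snd z))) \<partial>D)"
    using H by (intro nn_integral_smoothing_coupling[OF D]) simp
  also have "\<dots> = (\<integral>\<^sup>+ z. ennreal (\<Sum>j\<in>{0..m}. wt m j (fst z) * H (fst z, q_w D m j, snd z)) \<partial>D)"
  proof (intro nn_integral_cong_AE, use ae_D in eventually_elim)
    case (elim z)
    then have "(\<Sum>j\<in>{0..m}. ennreal (wt m j (fst z)) * ennreal (H (fst z, q_w D m j, snd z)))
        = (\<Sum>j\<in>{0..m}. ennreal (wt m j (fst z) * H (fst z, q_w D m j, snd z)))"
      by (intro sum.cong) (auto simp: ennreal_mult wt_nonneg)
    also have "\<dots> = ennreal (\<Sum>j\<in>{0..m}. wt m j (fst z) * H (fst z, q_w D m j, snd z))"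
      using elim by (intro sum_ennreal) (auto simp: wt_nonneg)
    finally show ?case .
  qed
  also have "enn2real \<dots> = (\<integral>z. (\<Sum>j\<in>{0..m}. wt m j (fst z) * H (fst z, q_w D m j, snd z)) \<partial>D)"
    using ae_D by (intro integral_eq_nn_integral[symmetric])
      (auto simp: measurable_is_dist[OF D] py_space_def wt_nonneg intro!: sum_nonneg elim!: AE_mp)
  finally show ?thesis .
qed

lemma distr_smoothing_coupling_fst:
  assumes D: "is_dist D" and m: "1 \<le> m"
  shows "distr (smoothing_coupling D m) py_space (\<lambda>(p, p', y). (p, y)) = D"
proof (rule measure_eqI)
  show "sets (distr (smoothing_coupling D m) py_space (\<lambda>(p, p', y). (p, y))) = sets D"
    using is_distD(2)[OF D] by simp
  fix A assume "A \<in> sets (distr (smoothing_coupling D m) py_space (\<lambda>(p, p', y). (p, y)))"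
  then have A: "A \<in> sets py_space"
    by simp
  have proj: "(\<lambda>(p, p', y). (p, y)) \<in> measurable ppy_space py_space"
    unfolding ppy_space_def py_space_def by measurable
  let ?S = "(\<lambda>(p, p', y). (p, y)) -` A \<inter> space ppy_space"
  have S: "?S \<in> sets ppy_space"
    using proj A by (rule measurable_sets)
  have "emeasure (distr (smoothing_coupling D m) py_space (\<lambda>(p, p', y). (p, y))) A
      = (\<integral>\<^sup>+ x. indicator ?S x \<partial>smoothing_coupling D m)"
    using proj A S by (simp add: emeasure_distr sets_smoothing_coupling
        sets_eq_imp_space_eq[OF sets_smoothing_coupling])
  also have "\<dots> = (\<integral>\<^sup>+ z. (\<Sum>j\<in>{0..m}. ennreal (wt m j (fst z))) * indicator A z \<partial>D)"
    using S by (subst nn_integral_smoothing_coupling[OF D])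
      (auto simp: sum_distrib_right space_ppy_space indicator_def)
  also have "\<dots> = (\<integral>\<^sup>+ z. indicator A z \<partial>D)"
    using is_distD(3)[OF D]
    by (intro nn_integral_cong_AE, eventually_elim) (simp add: sum_ennreal wt_nonneg sum_wt_eq_1[OF m])
  also have "\<dots> = emeasure D A"
    using A is_distD(2)[OF D] by simp
  finally show "emeasure (distr (smoothing_coupling D m) py_space (\<lambda>(p, p', y). (p, y))) A = emeasure D A" .
qed

lemma calibrated_smoothing_coupling:
  assumes D: "is_dist D"
  shows "calibrated (distr (smoothing_coupling D m) py_space (\<lambda>(p, p', y). (p', y)))"
  unfolding calibrated_def
proof
  fix A :: "real set" assume [measurable]: "A \<in> sets borel"
  let ?N = "distr (smoothing_coupling D m) py_space (\<lambda>(p, p', y). (p', y))"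
  have proj: "(\<lambda>(p, p', y). (p', y)) \<in> measurable (smoothing_coupling D m) py_space"
    unfolding measurable_cong_sets[OF sets_smoothing_coupling refl] ppy_space_def py_space_def
    by measurable
  have y_meas: "(\<lambda>z. indicator A (fst z) * of_bool (snd z) :: real) \<in> borel_measurable py_space"
    unfolding py_space_def by measurable
  have p_meas: "(\<lambda>z. indicator A (fst z) * fst z :: real) \<in> borel_measurable py_space"
    unfolding py_space_def by measurable
  have y_meas': "(\<lambda>x. indicator A (fst (snd x)) * of_bool (snd (snd x)) :: real)
      \<in> borel_measurable ppy_space"
    unfolding ppy_space_def by measurable
  have p_meas': "(\<lambda>x. indicator A (fst (snd x)) * fst (snd x) :: real) \<in> borel_measurable ppy_space"
    unfolding ppy_space_def by measurable
  have "(\<integral>z. indicator A (fst z) * of_bool (snd z) \<partial>?N)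
      = (\<integral>x. indicator A (fst (snd x)) * of_bool (snd (snd x)) \<partial>smoothing_coupling D m :: real)"
    using integral_distr[OF proj y_meas] by (simp add: case_prod_beta)
  also have "\<dots> = (\<integral>z. (\<Sum>j\<in>{0..m}. wt m j (fst z) * (indicator A (q_w D m j) * of_bool (snd z))) \<partial>D)"
    by (subst integral_smoothing_coupling[OF D y_meas']) simp_all
  also have "\<dots> = (\<Sum>j\<in>{0..m}. indicator A (q_w D m j) * (pi_w D m j * q_w D m j))"
    by (rule integral_sum_wt_y[OF D])
  also have "\<dots> = (\<integral>z. (\<Sum>j\<in>{0..m}. wt m j (fst z) * (indicator A (q_w D m j) * q_w D m j)) \<partial>D)"
    by (subst integral_sum_wt[OF D]) (simp add: mult_ac)
  also have "\<dots> = (\<integral>x. indicator A (fst (snd x)) * fst (snd x) \<partial>smoothing_coupling D m)"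
    by (subst integral_smoothing_coupling[OF D p_meas']) simp_all
  also have "\<dots> = (\<integral>z. indicator A (fst z) * fst z \<partial>?N)"
    using integral_distr[OF proj p_meas] by (simp add: case_prod_beta)
  finally show "(\<integral>z. indicator A (fst z) * of_bool (snd z) \<partial>?N) = (\<integral>z. indicator A (fst z) * fst z \<partial>?N)" .
qed

lemma smoothing_coupling_in_couplings:
  assumes D: "is_dist D" and m: "1 \<le> m"
  shows "smoothing_coupling D m \<in> couplings D"
  unfolding couplings_def
proof (intro CollectI conjI)
  show "prob_space (smoothing_coupling D m)"
    by (rule prob_space_smoothing_coupling[OF D m])
  show "sets (smoothing_coupling D m) = sets ppy_space"
    by (rule sets_smoothing_coupling)
  show "distr (smoothing_coupling D m) py_space (\<lambda>(p, p', y). (p, y)) = D"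
    by (rule distr_smoothing_coupling_fst[OF D m])
  show "calibrated (distr (smoothing_coupling D m) py_space (\<lambda>(p, p', y). (p', y)))"
    by (rule calibrated_smoothing_coupling[OF D])
  have "AE z in D. \<forall>j\<in>{0..m}. fst z \<in> {0..1} \<and> q_w D m j \<in> {0..1}"
    using is_distD(3)[OF D] q_w_bounds[OF D] by (auto elim!: AE_mp)
  then show "AE z in smoothing_coupling D m. fst z \<in> {0..1} \<and> fst (snd z) \<in> {0..1}"
    by (intro AE_smoothing_coupling[OF D]) (simp_all add: ppy_space_def)
qed

lemma smoothing_coupling_cost_le:
  assumes D: "is_dist D" and m: "1 \<le> m"
  shows "(\<integral>x. \<bar>fst x - fst (snd x)\<bar> \<partial>smoothing_coupling D m)
      \<le> 1 / real m + (\<Sum>j\<in>{0..m}. pi_w D m j * \<bar>q_w D m j - real j / real m\<bar>)"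
proof -
  have bucket: "wt m j p * \<bar>p - q\<bar> \<le> wt m j p * (1 / real m + \<bar>q - real j / real m\<bar>)" for j p q
  proof (cases "wt m j p = 0")
    case False
    then have "\<bar>p - real j / real m\<bar> \<le> 1 / real m"
      using abs_diff_less_1_if_wt_nonzero[OF False] m by (simp add: field_simps abs_less_iff abs_le_iff)
    then show ?thesis
      by (intro mult_left_mono) (auto simp: wt_nonneg)
  qed simp
  have "(\<lambda>x. \<bar>fst x - fst (snd x)\<bar>) \<in> borel_measurable ppy_space"
    unfolding ppy_space_def by measurable
  then have "(\<integral>x. \<bar>fst x - fst (snd x)\<bar> \<partial>smoothing_coupling D m)
      = (\<integral>z. (\<Sum>j\<in>{0..m}. wt m j (fst z) * \<bar>fst z - q_w D m j\<bar>) \<partial>D)"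
    by (subst integral_smoothing_coupling[OF D]) simp_all
  also have "\<dots> \<le> (\<integral>z. (\<Sum>j\<in>{0..m}. wt m j (fst z) * (1 / real m + \<bar>q_w D m j - real j / real m\<bar>)) \<partial>D)"
    using integrable_wt(1)[OF D] bucket
    by (intro integral_mono_AE' AE_I2 sum_nonneg sum_mono) (auto simp: wt_nonneg)
  also have "\<dots> = 1 / real m * (\<Sum>j\<in>{0..m}. pi_w D m j)
      + (\<Sum>j\<in>{0..m}. pi_w D m j * \<bar>q_w D m j - real j / real m\<bar>)"
    by (subst integral_sum_wt[OF D]) (simp add: sum.distrib sum_distrib_left algebra_simps)
  finally show ?thesis
    using sum_pi_w_eq_1[OF D m] by simp
qed

lemma emeasure_density_vimage:
  fixes h :: "'a \<Rightarrow> real"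
  assumes N: "prob_space N" and f: "f \<in> measurable N M" "A \<in> sets M"
    and h: "h \<in> borel_measurable N" "AE z in N. 0 \<le> h z \<and> h z \<le> 1"
  shows "emeasure (density N (\<lambda>z. ennreal (h z))) (f -` A \<inter> space N)
    = ennreal (\<integral>z. indicator A (f z) * h z \<partial>N)"
proof -
  have [measurable]: "(\<lambda>z. indicator A (f z) :: real) \<in> borel_measurable N"
    using f by (intro borel_measurable_indicator') auto
  have "emeasure (density N (\<lambda>z. ennreal (h z))) (f -` A \<inter> space N)
      = (\<integral>\<^sup>+ z. ennreal (h z) * indicator (f -` A \<inter> space N) z \<partial>N)"
    using h measurable_sets[OF f] by (intro emeasure_density) auto
  also have "\<dots> = (\<integral>\<^sup>+ z. ennreal (indicator A (f z) * h z) \<partial>N)"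
    by (intro nn_integral_cong) (auto simp: indicator_def)
  also have "\<dots> = ennreal (\<integral>z. indicator A (f z) * h z \<partial>N)"
  proof (rule nn_integral_eq_integral)
    have "AE z in N. norm (indicator A (f z) * h z) \<le> 1"
      using h(2) by eventually_elim (auto simp: indicator_def)
    then show "integrable N (\<lambda>z. indicator A (f z) * h z)"
      using h(1)
      by (intro finite_measure.integrable_const_bound[where B = 1] prob_space.finite_measure[OF N]) simp_all
    show "AE z in N. 0 \<le> indicator A (f z) * h z"
      using h(2) by eventually_elim (simp add: indicator_def)
  qed
  finally show ?thesis .
qed

text \<open>The definition of \<open>calibrated\<close> only tests indicators of Borel sets; comparing the
  \<open>y\<close>- and \<open>p\<close>-weighted distributions of \<open>p\<close> extends it to every Borel test function.\<close>

lemma calibrated_integral_eq: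
  assumes N: "prob_space N" "sets N = sets py_space" "AE z in N. fst z \<in> {0..1}"
    and cal: "calibrated N" and f: "f \<in> borel_measurable borel"
  shows "(\<integral>z. f (fst z) * of_bool (snd z) \<partial>N) = (\<integral>z. f (fst z) * fst z \<partial>N)"
proof -
  note meas = measurable_cong_sets[OF N(2) refl]
  have fst_meas [measurable]: "fst \<in> borel_measurable N"
    and y_meas [measurable]: "(\<lambda>z. of_bool (snd z) :: real) \<in> borel_measurable N"
    unfolding meas py_space_def by simp_all
  define N_y where "N_y = density N (\<lambda>z. ennreal (of_bool (snd z)))"
  define N_p where "N_p = density N (\<lambda>z. ennreal (fst z))"
  have "distr N_y borel fst = distr N_p borel fst"
  proof (rule measure_eqI)
    fix A assume "A \<in> sets (distr N_y borel fst)"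
    then have A: "A \<in> sets borel"
      by simp
    have "emeasure (distr N_y borel fst) A = ennreal (\<integral>z. indicator A (fst z) * of_bool (snd z) \<partial>N)"
      unfolding N_y_def using A by (simp add: emeasure_distr emeasure_density_vimage[OF N(1) fst_meas])
    also have "\<dots> = ennreal (\<integral>z. indicator A (fst z) * fst z \<partial>N)"
      using cal A unfolding calibrated_def by simp
    also have "\<dots> = emeasure (distr N_p borel fst) A"
      unfolding N_p_def using A N(3) by (simp add: emeasure_distr emeasure_density_vimage[OF N(1) fst_meas])
    finally show "emeasure (distr N_y borel fst) A = emeasure (distr N_p borel fst) A" .
  qed (simp add: N_y_def N_p_def)
  have "(\<integral>z. f (fst z) * of_bool (snd z) \<partial>N) = (\<integral>x. f x \<partial>distr N_y borel fst)"
    unfolding N_y_def using f by (simp add: integral_distr integral_density mult.commute)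
  also have "\<dots> = (\<integral>x. f x \<partial>distr N_p borel fst)"
    by (simp add: \<open>distr N_y borel fst = distr N_p borel fst\<close>)
  also have "\<dots> = (\<integral>z. f (fst z) * fst z \<partial>N)"
    unfolding N_p_def using f N(3)
    by (simp add: integral_distr integral_density mult.commute AE_mp[OF _ AE_I2])
  finally show ?thesis .
qed

lemma calibrated_integral_affine:
  assumes N: "prob_space N" "sets N = sets py_space" "AE z in N. fst z \<in> {0..1}"
    and cal: "calibrated N" and g: "g \<in> borel_measurable borel" "\<And>p. \<bar>g p\<bar> \<le> 1"
  shows "(\<integral>z. g (fst z) * (\<alpha> * of_bool (snd z) + \<beta>) \<partial>N) = (\<integral>z. g (fst z) * (\<alpha> * fst z + \<beta>) \<partial>N)"
proof -
  have "AE z in N. \<bar>g (fst z) * of_bool (snd z)\<bar> \<le> 1"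
    "AE z in N. \<bar>g (fst z)\<bar> \<le> 1" "AE z in N. \<bar>g (fst z) * fst z\<bar> \<le> 1"
    using N(3) g(2) by (auto simp: abs_mult intro!: mult_le_one elim!: AE_mp)
  then have "integrable N (\<lambda>z. g (fst z) * of_bool (snd z))"
    and "integrable N (\<lambda>z. g (fst z))"
    and "integrable N (\<lambda>z. g (fst z) * fst z)"
    using g(1) by (auto intro!: integrable_bounded[OF N(1,2)] simp: py_space_def)
  then have "(\<integral>z. g (fst z) * (\<alpha> * of_bool (snd z) + \<beta>) \<partial>N)
      = \<alpha> * (\<integral>z. g (fst z) * of_bool (snd z) \<partial>N) + \<beta> * (\<integral>z. g (fst z) \<partial>N)"
    and "(\<integral>z. g (fst z) * (\<alpha> * fst z + \<beta>) \<partial>N)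
      = \<alpha> * (\<integral>z. g (fst z) * fst z \<partial>N) + \<beta> * (\<integral>z. g (fst z) \<partial>N)"
    by (simp_all add: algebra_simps)
  then show ?thesis
    using calibrated_integral_eq[OF N cal g(1)] by simp
qed

lemma couplingsD:
  assumes "J \<in> couplings D"
  shows "prob_space J" "sets J = sets ppy_space"
    "AE z in J. fst z \<in> {0..1} \<and> fst (snd z) \<in> {0..1}"
    "distr J py_space (\<lambda>(p, p', y). (p, y)) = D"
    "calibrated (distr J py_space (\<lambda>(p, p', y). (p', y)))"
  using assms unfolding couplings_def by auto

lemma integral_coupling_fst:
  fixes F :: "real \<times> bool \<Rightarrow> real"
  assumes J: "J \<in> couplings D" and F: "F \<in> borel_measurable py_space"
  shows "(\<integral>z. F z \<partial>D) = (\<integral>x. F (fst x, snd (snd x)) \<partial>J)"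
proof -
  have "(\<lambda>(p, p', y). (p, y)) \<in> measurable J py_space"
    unfolding measurable_cong_sets[OF couplingsD(2)[OF J] refl] ppy_space_def py_space_def by measurable
  then show ?thesis
    unfolding couplingsD(4)[OF J, symmetric] by (simp add: integral_distr[OF _ F] case_prod_beta)
qed

lemma coupling_snd_marginal:
  fixes F :: "real \<times> bool \<Rightarrow> real"
  assumes J: "J \<in> couplings D"
  defines "N \<equiv> distr J py_space (\<lambda>(p, p', y). (p', y))"
  shows "prob_space N" "sets N = sets py_space" "AE z in N. fst z \<in> {0..1}" "calibrated N"
    and "F \<in> borel_measurable py_space \<Longrightarrow> (\<integral>z. F z \<partial>N) = (\<integral>x. F (fst (snd x), snd (snd x)) \<partial>J)"
proof -
  note J' = couplingsD[OF J]
  have proj: "(\<lambda>(p, p', y). (p', y)) \<in> measurable J py_space"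
    unfolding measurable_cong_sets[OF J'(2) refl] ppy_space_def py_space_def by measurable
  show "prob_space N" "sets N = sets py_space" "AE z in N. fst z \<in> {0..1}" "calibrated N"
    unfolding N_def using J' proj
    by (auto intro: prob_space.prob_space_distr simp: AE_distr_iff py_space_def case_prod_beta elim!: AE_mp)
  show "(\<integral>z. F z \<partial>N) = (\<integral>x. F (fst (snd x), snd (snd x)) \<partial>J)" if "F \<in> borel_measurable py_space"
    unfolding N_def using integral_distr[OF proj that] by (simp add: case_prod_beta)
qed

lemma coupling_cost_bounds:
  assumes J: "J \<in> couplings D"
  shows "integrable J (\<lambda>x. \<bar>fst x - fst (snd x)\<bar>)"
    and "0 \<le> (\<integral>x. \<bar>fst x - fst (snd x)\<bar> \<partial>J)"
    and "(\<integral>x. \<bar>fst x - fst (snd x)\<bar> \<partial>J) \<le> 1"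
proof -
  note J' = couplingsD[OF J]
  have bound: "AE x in J. \<bar>fst x - fst (snd x)\<bar> \<le> 1"
    using J'(3) by eventually_elim auto
  show integrable: "integrable J (\<lambda>x. \<bar>fst x - fst (snd x)\<bar>)"
    using bound by (intro integrable_bounded[OF J'(1,2)]) (simp_all add: ppy_space_def)
  show "0 \<le> (\<integral>x. \<bar>fst x - fst (snd x)\<bar> \<partial>J)"
    by (intro integral_nonneg_AE) auto
  have "(\<integral>x. \<bar>fst x - fst (snd x)\<bar> \<partial>J) \<le> (\<integral>x. 1 \<partial>J)"
    using integrable bound finite_measure.integrable_const[OF prob_space.finite_measure[OF J'(1)]]
    by (intro integral_mono_AE) auto
  then show "(\<integral>x. \<bar>fst x - fst (snd x)\<bar> \<partial>J) \<le> 1"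
    using prob_space.prob_space[OF J'(1)] by simp
qed

lemma DistCal_le_coupling_cost:
  assumes "J \<in> couplings D"
  shows "DistCal D \<le> (\<integral>x. \<bar>fst x - fst (snd x)\<bar> \<partial>J)"
  unfolding DistCal_def using assms coupling_cost_bounds(2)
  by (intro cINF_lower bdd_belowI[of _ 0]) auto

lemma DistCal_bounds:
  assumes "is_dist D"
  shows "0 \<le> DistCal D" "DistCal D \<le> 1"
proof -
  have J: "smoothing_coupling D 1 \<in> couplings D"
    by (rule smoothing_coupling_in_couplings[OF assms]) simp
  then show "0 \<le> DistCal D"
    unfolding DistCal_def by (intro cINF_greatest coupling_cost_bounds(2)) auto
  show "DistCal D \<le> 1"
    using DistCal_le_coupling_cost[OF J] coupling_cost_bounds(3)[OF J] by linarith
qed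

section \<open>Lower bound\<close>

lemma abs_diff_le_sq_excess:
  fixes q \<epsilon> :: real
  assumes "0 < m" "0 < \<epsilon>"
  shows "\<bar>q - real j / real m\<bar> \<le> 1 / real m + \<epsilon> / 2
      + ((max (q - real (j + 1) / real m) 0)\<^sup>2 + (max ((real j - 1) / real m - q) 0)\<^sup>2) / \<epsilon>"
proof -
  define t where "t = max (q - real (j + 1) / real m) 0"
  define s where "s = max ((real j - 1) / real m - q) 0"
  have "\<bar>q - real j / real m\<bar> \<le> 1 / real m + (t + s)"
    unfolding t_def s_def by (auto simp: add_divide_distrib diff_divide_distrib abs_if max_def)
  moreover have "2 * \<epsilon> * (t + s) \<le> 2 * (t\<^sup>2 + s\<^sup>2) + \<epsilon>\<^sup>2"
    using zero_le_square[of "t - s"] zero_le_square[of "t + s - \<epsilon>"]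
    by (simp add: power2_eq_square algebra_simps)
  then have "t + s \<le> (t\<^sup>2 + s\<^sup>2) / \<epsilon> + \<epsilon> / 2"
    using assms(2) by (simp add: field_simps power2_eq_square)
  ultimately show ?thesis
    unfolding t_def s_def by linarith
qed

lemma sum_pi_w_abs_diff_le:
  assumes D: "is_dist D" and m: "1 \<le> m" and \<epsilon>: "0 < \<epsilon>"
  shows "(\<Sum>j\<in>{0..m}. pi_w D m j * \<bar>q_w D m j - real j / real m\<bar>)
      \<le> 1 / real m + \<epsilon> / 2 + 8 * SCDL_m D m / \<epsilon>"
proof -
  define E where "E j = (max (q_w D m j - real (j + 1) / real m) 0)\<^sup>2
    + (max ((real j - 1) / real m - q_w D m j) 0)\<^sup>2" for j
  have "(\<Sum>j\<in>{0..m}. pi_w D m j * \<bar>q_w D m j - real j / real m\<bar>)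
      \<le> (\<Sum>j\<in>{0..m}. pi_w D m j * (1 / real m + \<epsilon> / 2 + E j / \<epsilon>))"
    unfolding E_def using m \<epsilon>
    by (intro sum_mono mult_left_mono abs_diff_le_sq_excess pi_w_nonneg) auto
  also have "\<dots> = (1 / real m + \<epsilon> / 2) * (\<Sum>j\<in>{0..m}. pi_w D m j) + (\<Sum>j\<in>{0..m}. pi_w D m j * E j) / \<epsilon>"
    by (simp add: algebra_simps sum.distrib sum_distrib_left sum_divide_distrib)
  also have "\<dots> \<le> 1 / real m + \<epsilon> / 2 + 8 * SCDL_m D m / \<epsilon>"
  proof -
    have "(\<Sum>j\<in>{0..m}. pi_w D m j * E j) \<le> 8 * SCDL_m D m"
      unfolding E_def SCDL_m_eq_Max_threshold_gap using m
      by (intro weighted_sq_excess_le_Max_threshold_gap pi_w_nonneg q_w_bounds[OF D]) simp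
    then show ?thesis
      using \<epsilon> by (simp add: sum_pi_w_eq_1[OF D m] divide_right_mono)
  qed
  finally show ?thesis .
qed

lemma DistCal_sq_le_SCDL_m:
  assumes D: "is_dist D" and m: "1 \<le> m"
  shows "(DistCal D)\<^sup>2 \<le> 121 * max (SCDL_m D m) (1 / real m)"
proof -
  define M where "M = max (SCDL_m D m) (1 / real m)"
  define \<epsilon> where "\<epsilon> = sqrt M"
  have "0 < M"
    unfolding M_def using m by (simp add: less_max_iff_disj)
  then have \<epsilon>: "0 < \<epsilon>" "\<epsilon> * \<epsilon> = M"
    unfolding \<epsilon>_def by simp_all
  have "8 * SCDL_m D m / \<epsilon> \<le> 8 * M / \<epsilon>"
    unfolding M_def using \<epsilon>(1) by (simp add: divide_right_mono)
  also have "\<dots> = 8 * \<epsilon>"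
    using \<epsilon> by (simp add: field_simps)
  finally have "DistCal D \<le> 2 * M + 17 / 2 * \<epsilon>"
    using DistCal_le_coupling_cost[OF smoothing_coupling_in_couplings[OF D m]]
      smoothing_coupling_cost_le[OF D m] sum_pi_w_abs_diff_le[OF D m \<epsilon>(1)]
    unfolding M_def by linarith
  show ?thesis
  proof (cases "M \<le> 1")
    case True
    then have "\<epsilon> \<le> 1"
      unfolding \<epsilon>_def by simp
    then have "M \<le> \<epsilon>"
      using \<epsilon> mult_left_le[of \<epsilon> \<epsilon>] by simp
    then have "DistCal D \<le> 21 / 2 * \<epsilon>"
      using \<open>DistCal D \<le> 2 * M + 17 / 2 * \<epsilon>\<close> by linarith
    then have "(DistCal D)\<^sup>2 \<le> (21 / 2 * \<epsilon>)\<^sup>2"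
      using DistCal_bounds(1)[OF D] by (intro power_mono) auto
    also have "\<dots> \<le> 121 * M"
      using \<epsilon> \<open>0 < M\<close> by (simp add: power2_eq_square)
    finally show ?thesis
      unfolding M_def .
  next
    case False
    have "(DistCal D)\<^sup>2 \<le> 1"
      using DistCal_bounds[OF D] by (simp add: power_le_one)
    then show ?thesis
      using False unfolding M_def by linarith
  qed
qed

lemma DistCal_sq_le_SCDL:
  assumes "is_dist D"
  shows "(DistCal D)\<^sup>2 / 121 \<le> SCDL D"
  unfolding SCDL_def
proof (rule cINF_greatest)
  fix k :: nat
  have "(DistCal D)\<^sup>2 \<le> 121 * max (SCDL_m D (2 ^ k)) (1 / real ((2::nat) ^ k))"
    by (rule DistCal_sq_le_SCDL_m[OF assms]) simp
  then show "(DistCal D)\<^sup>2 / 121 \<le> max (SCDL_m D (2 ^ k)) (1 / 2 ^ k)"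
    by simp
qed auto

section \<open>Upper bound\<close>

lemma coupling_calibrated_test_nonpos:
  assumes J: "J \<in> couplings D" and g: "g \<in> borel_measurable borel" "\<And>p. \<bar>g p\<bar> \<le> 1"
    and sign: "\<And>p. p \<in> {0..1} \<Longrightarrow> g p * (\<alpha> * p + \<beta>) \<le> 0"
  shows "(\<integral>x. g (fst (snd x)) * (\<alpha> * of_bool (snd (snd x)) + \<beta>) \<partial>J) \<le> 0"
proof -
  note N = coupling_snd_marginal[OF J]
  let ?N = "distr J py_space (\<lambda>(p, p', y). (p', y))"
  have test_meas: "(\<lambda>z. g (fst z) * (\<alpha> * of_bool (snd z) + \<beta>)) \<in> borel_measurable py_space"
    using g(1) unfolding py_space_def by measurable
  have "(\<integral>x. g (fst (snd x)) * (\<alpha> * of_bool (snd (snd x)) + \<beta>) \<partial>J)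
      = (\<integral>z. g (fst z) * (\<alpha> * fst z + \<beta>) \<partial>?N)"
    using calibrated_integral_affine[OF N(1-4) g] N(5)[OF test_meas] by simp
  also have "\<dots> \<le> (\<integral>z. 0 \<partial>?N)"
  proof (rule integral_mono_AE')
    show "AE z in ?N. g (fst z) * (\<alpha> * fst z + \<beta>) \<le> 0"
      using N(3) by eventually_elim (simp add: sign)
  qed simp_all
  finally show ?thesis
    by simp
qed

lemma coupling_weighted_affine_le:
  assumes J: "J \<in> couplings D" and g [measurable]: "g \<in> borel_measurable borel"
    and g_bounded: "\<And>p. \<bar>g p\<bar> \<le> 1" and sign: "\<And>p. p \<in> {0..1} \<Longrightarrow> g p * (\<alpha> * p + \<beta>) \<le> 0"
  shows "(\<integral>z. g (fst z) * (\<alpha> * of_bool (snd z) + \<beta>) \<partial>D)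
      \<le> (\<bar>\<alpha>\<bar> + \<bar>\<beta>\<bar>) * (\<integral>x. \<bar>g (fst x) - g (fst (snd x))\<bar> \<partial>J)"
proof -
  note J' = couplingsD[OF J]
  define B where "B = \<bar>\<alpha>\<bar> + \<bar>\<beta>\<bar>"
  define test where "test = (\<lambda>z. g (fst z) * (\<alpha> * of_bool (snd z) + \<beta>))"
  have test_diff: "\<bar>(g a - g b) * (\<alpha> * of_bool y + \<beta>)\<bar> \<le> \<bar>g a - g b\<bar> * B" for a b y
    unfolding abs_mult B_def by (cases y) (auto intro!: mult_left_mono)
  have test_bound: "\<bar>test z\<bar> \<le> B" for z
    using test_diff[of "fst z" "fst z"] g_bounded[of "fst z"] unfolding test_def B_def
    by (cases "snd z") (auto simp: abs_mult intro: order_trans[OF mult_left_le_one_le])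
  have test_meas: "test \<in> borel_measurable py_space"
    unfolding test_def py_space_def by measurable
  note test_meas[unfolded py_space_def, measurable]
  have integrable_test: "integrable J (\<lambda>x. test (fst x, snd (snd x)))"
    "integrable J (\<lambda>x. test (fst (snd x), snd (snd x)))"
    using test_bound by (auto intro!: integrable_bounded[OF J'(1,2), where B = B] simp: ppy_space_def)
  have "(\<integral>z. test z \<partial>D)
      \<le> (\<integral>x. test (fst x, snd (snd x)) \<partial>J) - (\<integral>x. test (fst (snd x), snd (snd x)) \<partial>J)"
    using coupling_calibrated_test_nonpos[OF J g g_bounded sign] integral_coupling_fst[OF J test_meas]
    unfolding test_def by simp
  also have "\<dots> = (\<integral>x. test (fst x, snd (snd x)) - test (fst (snd x), snd (snd x)) \<partial>J)"
    using integrable_test by (intro Bochner_Integration.integral_diff[symmetric])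
  also have "\<dots> \<le> (\<integral>x. \<bar>g (fst x) - g (fst (snd x))\<bar> * B \<partial>J)"
  proof (rule integral_mono)
    have "\<bar>g a - g b\<bar> * B \<le> 2 * B" for a b
      using g_bounded[of a] g_bounded[of b] by (intro mult_right_mono) (auto simp: B_def)
    then show "integrable J (\<lambda>x. \<bar>g (fst x) - g (fst (snd x))\<bar> * B)"
      by (intro integrable_bounded[OF J'(1,2), where B = "2 * B"] AE_I2) (auto simp: ppy_space_def B_def)
    show "test (fst x, snd (snd x)) - test (fst (snd x), snd (snd x))
        \<le> \<bar>g (fst x) - g (fst (snd x))\<bar> * B" for x
      using test_diff[of "fst x" "fst (snd x)" "snd (snd x)"] unfolding test_def by (simp add: algebra_simps)
  qed (use integrable_test in simp)
  finally show ?thesis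
    unfolding test_def B_def by (simp add: mult.commute)
qed

lemma pi_w_overshoot_le_coupling:
  assumes D: "is_dist D" and J: "J \<in> couplings D" and m: "0 < m" and a: "real (j + 1) / real m \<le> a"
  shows "pi_w D m j * max (q_w D m j - a) 0
      \<le> (1 + \<bar>a\<bar>) * (\<integral>x. \<bar>wt m j (fst x) - wt m j (fst (snd x))\<bar> \<partial>J)"
proof -
  have sign: "wt m j p * (1 * p + - a) \<le> 0" for p
    using wt_eq_0_if_ge[OF _ m, of j p] a wt_nonneg[of m j p]
    by (cases "a \<le> p") (auto intro: mult_nonneg_nonpos)
  have "pi_w D m j * (1 * q_w D m j + - a) = (\<integral>z. wt m j (fst z) * (1 * of_bool (snd z) + - a) \<partial>D)"
    by (rule integral_wt_affine[OF D, symmetric])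
  also have "\<dots> \<le> (\<bar>1\<bar> + \<bar>- a\<bar>) * (\<integral>x. \<bar>wt m j (fst x) - wt m j (fst (snd x))\<bar> \<partial>J)"
    using sign by (intro coupling_weighted_affine_le[OF J wt_borel]) (auto simp: wt_nonneg wt_le_1)
  finally have "pi_w D m j * (q_w D m j - a)
      \<le> (1 + \<bar>a\<bar>) * (\<integral>x. \<bar>wt m j (fst x) - wt m j (fst (snd x))\<bar> \<partial>J)"
    by simp
  moreover have "0 \<le> (\<integral>x. \<bar>wt m j (fst x) - wt m j (fst (snd x))\<bar> \<partial>J)"
    by (intro integral_nonneg_AE) auto
  ultimately show ?thesis
    by (auto simp: max_def)
qed

lemma pi_w_undershoot_le_coupling:
  assumes D: "is_dist D" and J: "J \<in> couplings D" and m: "0 < m" and b: "b \<le> (real j - 1) / real m"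
  shows "pi_w D m j * max (b - q_w D m j) 0
      \<le> (1 + \<bar>b\<bar>) * (\<integral>x. \<bar>wt m j (fst x) - wt m j (fst (snd x))\<bar> \<partial>J)"
proof -
  have sign: "wt m j p * (- 1 * p + b) \<le> 0" for p
    using wt_eq_0_if_le[OF _ m, of p j] b wt_nonneg[of m j p]
    by (cases "p \<le> b") (auto intro: mult_nonneg_nonpos)
  have "pi_w D m j * (- 1 * q_w D m j + b) = (\<integral>z. wt m j (fst z) * (- 1 * of_bool (snd z) + b) \<partial>D)"
    by (rule integral_wt_affine[OF D, symmetric])
  also have "\<dots> \<le> (\<bar>- 1\<bar> + \<bar>b\<bar>) * (\<integral>x. \<bar>wt m j (fst x) - wt m j (fst (snd x))\<bar> \<partial>J)"
    using sign by (intro coupling_weighted_affine_le[OF J wt_borel]) (auto simp: wt_nonneg wt_le_1)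
  finally have "pi_w D m j * (b - q_w D m j)
      \<le> (1 + \<bar>b\<bar>) * (\<integral>x. \<bar>wt m j (fst x) - wt m j (fst (snd x))\<bar> \<partial>J)"
    by simp
  moreover have "0 \<le> (\<integral>x. \<bar>wt m j (fst x) - wt m j (fst (snd x))\<bar> \<partial>J)"
    by (intro integral_nonneg_AE) auto
  ultimately show ?thesis
    by (auto simp: max_def)
qed

lemma sum_integral_wt_diff_le:
  assumes J: "J \<in> couplings D"
  shows "(\<Sum>j\<in>{0..m}. \<integral>x. \<bar>wt m j (fst x) - wt m j (fst (snd x))\<bar> \<partial>J)
      \<le> 3 * real m * (\<integral>x. \<bar>fst x - fst (snd x)\<bar> \<partial>J)"
proof -
  note J' = couplingsD[OF J]
  have "\<bar>\<bar>wt m j a - wt m j b\<bar>\<bar> \<le> 1" for j a b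
    using wt_nonneg[of m j a] wt_le_1[of m j a] wt_nonneg[of m j b] wt_le_1[of m j b]
    by (simp add: abs_le_iff)
  then have "integrable J (\<lambda>x. \<bar>wt m j (fst x) - wt m j (fst (snd x))\<bar>)" for j
    by (intro integrable_bounded[OF J'(1,2), where B = 1] AE_I2) (auto simp: ppy_space_def)
  then have "(\<Sum>j\<in>{0..m}. \<integral>x. \<bar>wt m j (fst x) - wt m j (fst (snd x))\<bar> \<partial>J)
      = (\<integral>x. (\<Sum>j\<in>{0..m}. \<bar>wt m j (fst x) - wt m j (fst (snd x))\<bar>) \<partial>J)"
    by (simp add: Bochner_Integration.integral_sum)
  also have "\<dots> \<le> (\<integral>x. 3 * real m * \<bar>fst x - fst (snd x)\<bar> \<partial>J)"
    using coupling_cost_bounds(1)[OF J] by (intro integral_mono_AE' AE_I2 sum_wt_abs_diff_le) auto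
  finally show ?thesis
    by simp
qed

lemma threshold_gap_le_coupling:
  assumes D: "is_dist D" and J: "J \<in> couplings D" and m: "1 \<le> m" and i: "i \<le> m"
  shows "threshold_gap m (pi_w D m) (q_w D m) i
      \<le> 3 * (\<Sum>j\<in>{0..m}. \<integral>x. \<bar>wt m j (fst x) - wt m j (fst (snd x))\<bar> \<partial>J)"
proof -
  define I where "I j = (\<integral>x. \<bar>wt m j (fst x) - wt m j (fst (snd x))\<bar> \<partial>J)" for j
  have I_nonneg: "0 \<le> I j" for j
    unfolding I_def by (intro integral_nonneg_AE) auto
  have "(\<Sum>j\<in>{0..i}. pi_w D m j * max (q_w D m j - real (i + 1) / real m) 0) \<le> (\<Sum>j\<in>{0..i}. 3 * I j)"
  proof (rule sum_mono)
    fix j assume "j \<in> {0..i}"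
    then have "real (j + 1) / real m \<le> real (i + 1) / real m"
      by (intro divide_right_mono) auto
    then have "pi_w D m j * max (q_w D m j - real (i + 1) / real m) 0
        \<le> (1 + \<bar>real (i + 1) / real m\<bar>) * I j"
      unfolding I_def using m by (intro pi_w_overshoot_le_coupling[OF D J]) auto
    also have "\<dots> \<le> 3 * I j"
      using i m I_nonneg by (intro mult_right_mono) (auto simp: field_simps)
    finally show "pi_w D m j * max (q_w D m j - real (i + 1) / real m) 0 \<le> 3 * I j" .
  qed
  moreover have "(\<Sum>j\<in>{i+1..m}. pi_w D m j * max (real i / real m - q_w D m j) 0) \<le> (\<Sum>j\<in>{i+1..m}. 3 * I j)"
  proof (rule sum_mono)
    fix j assume "j \<in> {i+1..m}"
    then have "real i / real m \<le> (real j - 1) / real m"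
      by (intro divide_right_mono) auto
    then have "pi_w D m j * max (real i / real m - q_w D m j) 0 \<le> (1 + \<bar>real i / real m\<bar>) * I j"
      unfolding I_def using m by (intro pi_w_undershoot_le_coupling[OF D J]) auto
    also have "\<dots> \<le> 3 * I j"
      using i m I_nonneg by (intro mult_right_mono) (auto simp: field_simps)
    finally show "pi_w D m j * max (real i / real m - q_w D m j) 0 \<le> 3 * I j" .
  qed
  moreover have "{0..m} = {0..i} \<union> {i+1..m}"
    using i by auto
  then have "(\<Sum>j\<in>{0..i}. 3 * I j) + (\<Sum>j\<in>{i+1..m}. 3 * I j) = 3 * (\<Sum>j\<in>{0..m}. I j)"
    by (simp add: sum_distrib_left sum.union_disjoint)
  ultimately show ?thesis
    unfolding threshold_gap_def I_def by linarith
qed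

lemma SCDL_m_le_coupling_cost:
  assumes D: "is_dist D" and J: "J \<in> couplings D" and m: "1 \<le> m"
  shows "SCDL_m D m \<le> 9 * real m * (\<integral>x. \<bar>fst x - fst (snd x)\<bar> \<partial>J)"
  unfolding SCDL_m_eq_Max_threshold_gap
proof (rule Max.boundedI)
  fix t assume "t \<in> threshold_gap m (pi_w D m) (q_w D m) ` {0..m}"
  then show "t \<le> 9 * real m * (\<integral>x. \<bar>fst x - fst (snd x)\<bar> \<partial>J)"
    using threshold_gap_le_coupling[OF D J m] sum_integral_wt_diff_le[OF J, of m] by fastforce
qed auto

lemma exists_dyadic_scale:
  fixes r :: real
  assumes "0 < r" "r \<le> 1"
  obtains k :: nat where "1 \<le> k" "1 / 2 ^ k \<le> r" "r * 2 ^ k \<le> 2"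
proof -
  have r_inv: "1 \<le> \<lfloor>1 / r\<rfloor>"
    using assms by (simp add: le_floor_iff)
  then have "1 \<le> nat \<lfloor>1 / r\<rfloor>"
    by linarith
  then obtain n where n: "2 ^ n \<le> nat \<lfloor>1 / r\<rfloor>" "nat \<lfloor>1 / r\<rfloor> < 2 ^ (n + 1)"
    using ex_power_ivl1[of 2 "nat \<lfloor>1 / r\<rfloor>"] by blast
  have "2 ^ n \<le> 1 / r"
    using n(1) r_inv by (simp add: le_floor_iff)
  have "1 / r < 2 ^ (n + 1)"
    using n(2) by (metis nat_less_numeral_power_cancel_iff floor_numeral_power floor_less_cancel)
  show ?thesis
  proof
    show "1 / 2 ^ (n + 1) \<le> r" "r * 2 ^ (n + 1) \<le> 2"
      using \<open>2 ^ n \<le> 1 / r\<close> \<open>1 / r < 2 ^ (n + 1)\<close> assms(1) by (simp_all add: field_simps)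
  qed simp
qed

lemma SCDL_le_sqrt_coupling_cost:
  assumes D: "is_dist D" and J: "J \<in> couplings D"
    and cost: "(\<integral>x. \<bar>fst x - fst (snd x)\<bar> \<partial>J) \<le> r\<^sup>2" and r: "0 < r" "r \<le> 1"
  shows "SCDL D \<le> 18 * r"
proof -
  obtain k :: nat where k: "1 \<le> k" "1 / 2 ^ k \<le> r" "r * 2 ^ k \<le> 2"
    using exists_dyadic_scale[OF r] .
  have "SCDL_m D (2 ^ k) \<le> 9 * 2 ^ k * (\<integral>x. \<bar>fst x - fst (snd x)\<bar> \<partial>J)"
    using SCDL_m_le_coupling_cost[OF D J, of "2 ^ k"] by simp
  also have "\<dots> \<le> 9 * 2 ^ k * r\<^sup>2"
    using cost by (intro mult_left_mono) auto
  also have "\<dots> = 9 * r * (r * 2 ^ k)"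
    by (simp add: power2_eq_square)
  also have "\<dots> \<le> 18 * r"
    using k(3) r(1) by (intro order_trans[OF mult_left_mono[OF k(3)]]) auto
  finally show ?thesis
    using SCDL_le_scale[OF k(1), of D] k(2) r(1) by linarith
qed

lemma SCDL_le_sqrt_DistCal:
  assumes D: "is_dist D"
  shows "SCDL D \<le> 18 * sqrt (DistCal D)"
proof -
  have "(SCDL D)\<^sup>2 / 324 \<le> (\<integral>x. \<bar>fst x - fst (snd x)\<bar> \<partial>J)" if J: "J \<in> couplings D" for J
  proof (rule dense_ge)
    fix e assume e: "(\<integral>x. \<bar>fst x - fst (snd x)\<bar> \<partial>J) < e"
    have "0 < e"
      using e coupling_cost_bounds(2)[OF J] by linarith
    define r where "r = sqrt (min e 1)"
    have r: "0 < r" "r \<le> 1" "r\<^sup>2 = min e 1"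
      unfolding r_def using \<open>0 < e\<close> by auto
    then have "SCDL D \<le> 18 * r"
      using e coupling_cost_bounds(3)[OF J] by (intro SCDL_le_sqrt_coupling_cost[OF D J]) auto
    then have "(SCDL D)\<^sup>2 \<le> (18 * r)\<^sup>2"
      using SCDL_nonneg by (intro power_mono) auto
    then show "(SCDL D)\<^sup>2 / 324 \<le> e"
      using r(3) by (simp add: power_mult_distrib)
  qed
  then have "(SCDL D)\<^sup>2 / 324 \<le> DistCal D"
    unfolding DistCal_def using smoothing_coupling_in_couplings[OF D, of 1]
    by (intro cINF_greatest) auto
  then have "sqrt ((SCDL D)\<^sup>2) \<le> sqrt (324 * DistCal D)"
    by (intro real_sqrt_le_mono) simp
  then show ?thesis
    using SCDL_nonneg by (simp add: real_sqrt_mult)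
qed

theorem theorem6p1:
  shows "\<exists>c C::real. c > 0 \<and> C > 0 \<and>
    (\<forall>D. is_dist D \<longrightarrow>
       c * (DistCal D)\<^sup>2 \<le> SCDL D \<and> SCDL D \<le> C * sqrt (DistCal D))"
proof (intro exI conjI allI impI)
  fix D assume "is_dist D"
  then show "1 / 121 * (DistCal D)\<^sup>2 \<le> SCDL D" and "SCDL D \<le> 18 * sqrt (DistCal D)"
    using DistCal_sq_le_SCDL SCDL_le_sqrt_DistCal by auto
qed simp_all

end
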